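(* Let $f$ be a multiplicative function from the positive integers to the nonnegative integers with $f(p^{k-1})\le f(p^k)$ for all primes $p$ and integers $k\ge1$. Every positive integer is $f$-practical if and only if $$f(p^k)\le S_f(p^{k-1})+1$$ holds for every prime $p$ and every integer $k\ge1$.
   Context: $f$ multiplicative means $f(1)=1$ and $f(ab)=f(a)f(b)$ for coprime $a,b$. $S_f(n)=\sum_{d\mid n} f(d)$. A positive integer $n$ is $f$-practical if every positive integer $m\le S_f(n)$ equals $\sum_{d\in\mathcal{D}}f(d)$ for some set $\mathcal{D}$ of distinct divisors of $n$. *)

theory Defs
  imports "HOL-Computational_Algebra.Primes"
begin

definition multiplicative_fun :: "(nat \<Rightarrow> nat) \<Rightarrow> bool" where
  "multiplicative_fun f \<longleftrightarrow> f 1 = 1 \<and>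
     (\<forall>a b. 0 < a \<longrightarrow> 0 < b \<longrightarrow> coprime a b \<longrightarrow> f (a * b) = f a * f b)"

definition S_f :: "(nat \<Rightarrow> nat) \<Rightarrow> nat \<Rightarrow> nat" where
  "S_f f n = (\<Sum>d \<in> {d. d dvd n}. f d)"

definition f_practical :: "(nat \<Rightarrow> nat) \<Rightarrow> nat \<Rightarrow> bool" where
  "f_practical f n \<longleftrightarrow>
     (\<forall>m. 1 \<le> m \<and> m \<le> S_f f n \<longrightarrow>
        (\<exists>D. D \<subseteq> {d. d dvd n} \<and> m = (\<Sum>d \<in> D. f d)))"

end

theory Submission
  imports Defs
begin

text \<open>
  If p does not divide m, the divisors of m p^(j+1) are those of m p^j together with the
  disjoint family d p^(j+1), d | m, whose f-values are f(d) f(p^(j+1)). Hence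
  S_f(m p^(j+1)) = S_f(m p^j) + f(p^(j+1)) S_f(m), and every x up to this bound is represented
  by writing x = r + c f(p^(j+1)) with c \<le> S_f(m) and r \<le> S_f(m p^j); division with
  remainder achieves this as soon as f(p^(j+1)) \<le> S_f(p^j) + 1. Induction over the prime
  factorisation gives sufficiency. Conversely, if f(p^k) > S_f(p^(k-1)) + 1, then
  S_f(p^(k-1)) + 1 is not a sum over divisors of p^k: any set containing p^k gives too much,
  any other too little.
\<close>

definition divisor_subset_sums :: "(nat \<Rightarrow> nat) \<Rightarrow> nat \<Rightarrow> nat set" where
  "divisor_subset_sums f n = {sum f D | D. D \<subseteq> {d. d dvd n}}"

lemma zero_in_divisor_subset_sums: "0 \<in> divisor_subset_sums f n"
  unfolding divisor_subset_sums_def by (auto intro: exI[of _ "{}"])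

lemma f_practical_iff_atMost_subset:
  "f_practical f n \<longleftrightarrow> {..S_f f n} \<subseteq> divisor_subset_sums f n"
proof -
  have "f_practical f n \<longleftrightarrow> (\<forall>x. 1 \<le> x \<and> x \<le> S_f f n \<longrightarrow> x \<in> divisor_subset_sums f n)"
    unfolding f_practical_def divisor_subset_sums_def by blast
  also have "\<dots> \<longleftrightarrow> {..S_f f n} \<subseteq> divisor_subset_sums f n"
    using zero_in_divisor_subset_sums[of f n] by (auto simp: Suc_le_eq) (metis gr0I)
  finally show ?thesis .
qed

lemma sum_le_S_f:
  assumes "n > 0" "D \<subseteq> {d. d dvd n}"
  shows "sum f D \<le> S_f f n"
  unfolding S_f_def using assms by (intro sum_mono2) auto

lemma S_f_mono_dvd:
  assumes "a dvd b" "b > 0"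
  shows "S_f f a \<le> S_f f b"
  unfolding S_f_def using assms by (intro sum_mono2) (auto intro: dvd_trans)

lemma S_f_1:
  assumes "multiplicative_fun f"
  shows "S_f f 1 = 1"
  using assms unfolding S_f_def multiplicative_fun_def by simp

lemma f_practical_1:
  assumes "multiplicative_fun f"
  shows "f_practical f 1"
proof -
  have "1 \<in> divisor_subset_sums f 1"
    using assms unfolding divisor_subset_sums_def multiplicative_fun_def
    by (auto intro!: exI[of _ "{1}"])
  moreover have "{..S_f f 1} = {0, 1}"
    using S_f_1[OF assms] by auto
  ultimately show ?thesis
    using zero_in_divisor_subset_sums[of f 1] by (simp add: f_practical_iff_atMost_subset)
qed

lemma divisors_mult_prime_power_Suc:
  fixes m p :: nat
  assumes "prime p"
  shows "{e. e dvd m * p ^ Suc j} = {e. e dvd m * p ^ j} \<union> (\<lambda>d. d * p ^ Suc j) ` {d. d dvd m}"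
proof (intro equalityI subsetI)
  fix e assume "e \<in> {e. e dvd m * p ^ Suc j}"
  then obtain b c where "e = b * c" "b dvd m" "c dvd p ^ Suc j"
    using division_decomp by blast
  moreover obtain i where "i \<le> Suc j" "c = p ^ i"
    using \<open>c dvd p ^ Suc j\<close> divides_primepow_nat[OF assms] by blast
  ultimately have e: "e = b * p ^ i" "b dvd m" "i \<le> Suc j" by simp_all
  show "e \<in> {e. e dvd m * p ^ j} \<union> (\<lambda>d. d * p ^ Suc j) ` {d. d dvd m}"
  proof (cases "i = Suc j")
    case False
    then have "p ^ i dvd p ^ j" using e(3) by (simp add: le_imp_power_dvd)
    then show ?thesis using e by (simp add: mult_dvd_mono)
  qed (use e in auto)
qed (auto intro: dvd_trans[of _ "m * p ^ j"] mult_dvd_mono)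

lemma divisors_mult_prime_power_disjoint:
  fixes m p :: nat
  assumes "prime p" "coprime m p"
  shows "{e. e dvd m * p ^ j} \<inter> (\<lambda>d. d * p ^ Suc j) ` {d. d dvd m} = {}"
proof (rule ccontr)
  assume "\<not> ?thesis"
  then obtain d where "d * p ^ Suc j dvd m * p ^ j" by blast
  then have "p ^ j * p dvd p ^ j * m" by (metis dvd_mult_left mult.commute power_Suc2)
  then have "p dvd m" using assms(1) by (simp add: prime_gt_0_nat)
  then show False using assms by (metis coprime_absorb_right not_prime_unit coprime_commute)
qed

lemma sum_image_mult_coprime:
  assumes mult: "multiplicative_fun f" and "q > 0" "m > 0" "coprime m q" "D \<subseteq> {d. d dvd m}"
  shows "sum f ((\<lambda>d. d * q) ` D) = f q * sum f D"
proof -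
  have "f (d * q) = f d * f q" if "d \<in> D" for d
  proof -
    have "d dvd m" "d > 0" using that assms by (auto intro: Nat.gr0I)
    then have "coprime d q" using \<open>coprime m q\<close> by (meson coprime_imp_coprime dvd_trans)
    then show ?thesis using mult \<open>d > 0\<close> \<open>q > 0\<close> unfolding multiplicative_fun_def by simp
  qed
  moreover have "inj_on (\<lambda>d. d * q) D" using \<open>q > 0\<close> by (auto simp: inj_on_def)
  ultimately have "sum f ((\<lambda>d. d * q) ` D) = (\<Sum>d\<in>D. f d * f q)"
    by (simp add: sum.reindex)
  then show ?thesis by (simp add: sum_distrib_left mult.commute)
qed

lemma S_f_mult_prime_power_Suc:
  fixes m p :: nat
  assumes mult: "multiplicative_fun f" and p: "prime p" and "coprime m p" "m > 0"
  shows "S_f f (m * p ^ Suc j) = S_f f (m * p ^ j) + f (p ^ Suc j) * S_f f m"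
proof -
  have "p > 0" using p prime_gt_0_nat by blast
  have "coprime m (p ^ Suc j)" using \<open>coprime m p\<close> by simp
  have "S_f f (m * p ^ Suc j)
      = S_f f (m * p ^ j) + sum f ((\<lambda>d. d * p ^ Suc j) ` {d. d dvd m})"
    unfolding S_f_def divisors_mult_prime_power_Suc[OF p]
    using divisors_mult_prime_power_disjoint[OF p \<open>coprime m p\<close>] \<open>p > 0\<close> \<open>m > 0\<close>
    by (intro sum.union_disjoint) auto
  also have "\<dots> = S_f f (m * p ^ j) + f (p ^ Suc j) * S_f f m"
    using sum_image_mult_coprime[OF mult _ \<open>m > 0\<close> \<open>coprime m (p ^ Suc j)\<close>] \<open>p > 0\<close>
    by (simp add: S_f_def)
  finally show ?thesis .
qed

lemma nat_decompose_le_add_mult: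
  fixes x A w M :: nat
  assumes "x \<le> A + w * M" "w \<le> A + 1"
  obtains c r where "c \<le> M" "r \<le> A" "x = r + c * w"
proof -
  define c where "c = min M (x div w)"
  have "c * w \<le> x" using div_times_less_eq_dividend[of x w] unfolding c_def
    by (meson min.cobounded2 mult_le_mono1 order.trans)
  moreover have "x - c * w \<le> A"
  proof (cases "c = M \<or> w = 0")
    case True
    then show ?thesis using assms(1) unfolding c_def by (auto simp: mult.commute)
  next
    case False
    then have "x - c * w = x mod w" by (simp add: c_def min_def minus_div_mult_eq_mod split: if_splits)
    also have "\<dots> < w" using False by simp
    finally show ?thesis using assms(2) by simp
  qed
  ultimately show thesis using that[of c "x - c * w"] by (simp add: c_def)
qed

lemma f_practical_mult_prime_power_Suc:
  fixes m p :: nat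
  assumes mult: "multiplicative_fun f" and p: "prime p" and "coprime m p" "m > 0"
    and "f_practical f (m * p ^ j)" "f_practical f m"
    and small: "f (p ^ Suc j) \<le> S_f f (p ^ j) + 1"
  shows "f_practical f (m * p ^ Suc j)"
  unfolding f_practical_iff_atMost_subset
proof
  define w where "w = f (p ^ Suc j)"
  have "p > 0" using p prime_gt_0_nat by blast
  fix x assume "x \<in> {..S_f f (m * p ^ Suc j)}"
  then have "x \<le> S_f f (m * p ^ j) + w * S_f f m"
    using S_f_mult_prime_power_Suc[OF assms(1-4)] by (simp add: w_def)
  moreover have "w \<le> S_f f (m * p ^ j) + 1"
    using small S_f_mono_dvd[of "p ^ j" "m * p ^ j" f] \<open>m > 0\<close> \<open>p > 0\<close> by (simp add: w_def)
  ultimately obtain c r where "c \<le> S_f f m" "r \<le> S_f f (m * p ^ j)" and x: "x = r + c * w"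
    by (rule nat_decompose_le_add_mult)
  then have "r \<in> divisor_subset_sums f (m * p ^ j)" "c \<in> divisor_subset_sums f m"
    using assms(5,6) by (auto simp: f_practical_iff_atMost_subset)
  then obtain D1 D2 where D1: "D1 \<subseteq> {d. d dvd m * p ^ j}" "r = sum f D1"
    and D2: "D2 \<subseteq> {d. d dvd m}" "c = sum f D2"
    unfolding divisor_subset_sums_def by blast
  let ?D = "D1 \<union> (\<lambda>d. d * p ^ Suc j) ` D2"
  have "finite D1" "finite D2"
    using D1(1) D2(1) \<open>m > 0\<close> \<open>p > 0\<close> by (auto intro: finite_subset)
  moreover have "D1 \<inter> (\<lambda>d. d * p ^ Suc j) ` D2 = {}"
    using divisors_mult_prime_power_disjoint[OF p \<open>coprime m p\<close>, of j] D1(1) D2(1) by blast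
  ultimately have "x = sum f ?D"
    using D1 D2 sum_image_mult_coprime[OF mult _ \<open>m > 0\<close> _ D2(1), of "p ^ Suc j"]
      \<open>p > 0\<close> \<open>coprime m p\<close> by (simp add: x sum.union_disjoint w_def)
  moreover have "?D \<subseteq> {d. d dvd m * p ^ Suc j}"
    using D1(1) D2(1) divisors_mult_prime_power_Suc[OF p, of m j] by blast
  ultimately show "x \<in> divisor_subset_sums f (m * p ^ Suc j)"
    unfolding divisor_subset_sums_def by blast
qed

lemma f_practical_prime_power_imp_le:
  fixes p :: nat
  assumes mult: "multiplicative_fun f" and p: "prime p" and "f_practical f (p ^ Suc j)"
  shows "f (p ^ Suc j) \<le> S_f f (p ^ j) + 1"
proof (rule ccontr)
  assume large: "\<not> ?thesis"
  have "p > 0" using p prime_gt_0_nat by blast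
  have divisors: "{e. e dvd p ^ Suc j} = insert (p ^ Suc j) {e. e dvd p ^ j}"
    using divisors_mult_prime_power_Suc[OF p, of 1 j] by auto
  have "S_f f (p ^ Suc j) = S_f f (p ^ j) + f (p ^ Suc j)"
    using S_f_mult_prime_power_Suc[OF mult p, of 1 j] S_f_1[OF mult] by simp
  then have "S_f f (p ^ j) + 1 \<in> divisor_subset_sums f (p ^ Suc j)"
    using assms(3) large by (auto simp: f_practical_iff_atMost_subset)
  then obtain D where D: "D \<subseteq> {e. e dvd p ^ Suc j}" "sum f D = S_f f (p ^ j) + 1"
    unfolding divisor_subset_sums_def by auto
  show False
  proof (cases "p ^ Suc j \<in> D")
    case True
    have "finite D" using D(1) \<open>p > 0\<close> by (auto intro: finite_subset)
    then have "f (p ^ Suc j) \<le> sum f D" using True by (intro member_le_sum) auto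
    then show False using D(2) large by simp
  next
    case False
    then have "sum f D \<le> S_f f (p ^ j)"
      using D(1) \<open>p > 0\<close> divisors by (intro sum_le_S_f) auto
    then show False using D(2) by simp
  qed
qed

lemma all_f_practical:
  assumes mult: "multiplicative_fun f"
    and small: "\<And>p j. prime p \<Longrightarrow> f (p ^ Suc j) \<le> S_f f (p ^ j) + 1"
    and "n > 0"
  shows "f_practical f n"
  using \<open>n > 0\<close>
proof (induction n rule: less_induct)
  case (less n)
  show ?case
  proof (cases "n = 1")
    case False
    then obtain p where p: "prime p" "p dvd n" using prime_factor_nat by blast
    define k where "k = multiplicity p n"
    obtain m where n: "n = m * p ^ k" and "\<not> p dvd m"
      using multiplicity_decompose'[of n p] less.prems prime_gt_1_nat[OF p(1)]
      by (auto simp: k_def mult.commute)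
    have "coprime m p" using \<open>\<not> p dvd m\<close> p(1) by (metis coprime_commute prime_imp_coprime)
    have "m > 0" using n less.prems by (auto intro: Nat.gr0I)
    have "k > 0"
      using p less.prems by (simp add: k_def prime_multiplicity_gt_zero_iff)
    then have "p ^ k > 1" using prime_gt_1_nat[OF p(1)] one_less_power by blast
    then have "m < n" using n \<open>m > 0\<close> by (metis mult_less_cancel1 nat_mult_1_right)
    then have "f_practical f m" using less.IH \<open>m > 0\<close> by blast
    have "f_practical f (m * p ^ j)" for j
    proof (induction j)
      case (Suc j)
      then show ?case
        using f_practical_mult_prime_power_Suc[OF mult p(1) \<open>coprime m p\<close> \<open>m > 0\<close>]
          \<open>f_practical f m\<close> small[OF p(1)] by blast
    qed (use \<open>f_practical f m\<close> in simp)
    then show ?thesis using n by simp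
  qed (use f_practical_1[OF mult] in simp)
qed

theorem theorem2p7:
  fixes f :: "nat \<Rightarrow> nat"
  assumes mult: "multiplicative_fun f"
    and mono: "\<And>p k. prime p \<Longrightarrow> k \<ge> 1 \<Longrightarrow> f (p ^ (k - 1)) \<le> f (p ^ k)"
  shows "(\<forall>n. n > 0 \<longrightarrow> f_practical f n) \<longleftrightarrow>
         (\<forall>p k. prime p \<longrightarrow> k \<ge> 1 \<longrightarrow> f (p ^ k) \<le> S_f f (p ^ (k - 1)) + 1)"
proof (intro iffI allI impI)
  fix p k :: nat
  assume "\<forall>n. n > 0 \<longrightarrow> f_practical f n" "prime p" "k \<ge> 1"
  moreover obtain j where "k = Suc j" using \<open>k \<ge> 1\<close> by (cases k) auto
  ultimately show "f (p ^ k) \<le> S_f f (p ^ (k - 1)) + 1"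
    using f_practical_prime_power_imp_le[OF mult] prime_gt_0_nat by simp
next
  fix n :: nat
  assume small: "\<forall>p k. prime p \<longrightarrow> k \<ge> 1 \<longrightarrow> f (p ^ k) \<le> S_f f (p ^ (k - 1)) + 1"
    and "n > 0"
  have "f (p ^ Suc j) \<le> S_f f (p ^ j) + 1" if "prime p" for p j
    using small[rule_format, of p "Suc j"] that by simp
  then show "f_practical f n" using all_f_practical[OF mult] \<open>n > 0\<close> by blast
qed

end
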